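(* Let $q$ be a power of a prime $p \neq 2,3$, let $b,c \in \mathbb F_q$ be such that $g(T) = T^3 + bT^2 + cT + 1$ is irreducible over $\mathbb F_q$, and let $F = y^2 - xz$, $G = x^2 + by^2 + cxy + yz$. Let $H_\pi(r,s) = \mathcal H(M_{rF+G}, M_{sF+G})$. Then: (i) $H_\pi$ is a polynomial of degree at most $2$ in $r$ whose coefficient of $r^2$ is a nonzero constant multiple of $h_0(s) = 3s^4 + 4bs^3 + 6cs^2 + 12 s + 4b - c^2$; (ii) the discriminant of $H_\pi$ with respect to $r$ equals a nonzero constant times $g(s)^2 \, f_\pi(s)$, where $f_\pi(s) = (b^2 - 3c)s^2 + (bc - 9)s + (c^2 - 3b)$; (iii) the coefficients $b^2-3c$ and $bc-9$ are not both zero, and $(bc-9)^2 - 4(b^2-3c)(c^2-3b) \neq 0$ (so $f_\pi$ is not a constant multiple of the square of a linear polynomial).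
   Context: For a quadratic form $K(x,y,z)$ over $\mathbb F_q$, $M_K$ denotes its symmetric $3\times 3$ matrix (so $K(v) = v^T M_K v$). For symmetric $3\times3$ matrices $A,B$, write $\det(tA+B) = \Delta_0 + \Delta_1 t + \Delta_2 t^2 + \Delta_3 t^3$ and set $\mathcal H(A,B) = \Delta_1^2 - 4\Delta_0\Delta_2$. *)

theory Defs
  imports "HOL-Analysis.Analysis" "HOL-Computational_Algebra.Polynomial"
begin

text \<open>Symmetric 3x3 matrix of the ternary quadratic form
  cxx x^2 + cyy y^2 + czz z^2 + cxy xy + cxz xz + cyz yz
  over a commutative ring, where h is one half (the inverse of 2).  Indices 0,1,2 of type 3 correspond to x,y,z.\<close>
definition qmat :: "'b::comm_ring_1 \<Rightarrow> 'b \<Rightarrow> 'b \<Rightarrow> 'b \<Rightarrow> 'b \<Rightarrow> 'b \<Rightarrow> 'b \<Rightarrow> 'b^3^3" where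
  "qmat h cxx cyy czz cxy cxz cyz =
     vector [vector [cxx, h * cxy, h * cxz],
             vector [h * cxy, cyy, h * cyz],
             vector [h * cxz, h * cyz, czz]]"

definition pencil_det :: "'b::comm_ring_1^3^3 \<Rightarrow> 'b^3^3 \<Rightarrow> 'b poly" where
  "pencil_det A B = det (\<chi> i j. [: B $ i $ j, A $ i $ j :])"

definition Delta :: "nat \<Rightarrow> 'b::comm_ring_1^3^3 \<Rightarrow> 'b^3^3 \<Rightarrow> 'b" where
  "Delta k A B = coeff (pencil_det A B) k"

definition HH :: "'b::comm_ring_1^3^3 \<Rightarrow> 'b^3^3 \<Rightarrow> 'b" where
  "HH A B = (Delta 1 A B)^2 - 4 * Delta 0 A B * Delta 2 A B"

text \<open>Bivariate polynomials in r, s over 'a: type 'a poly poly, outer variable r,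
  inner variable s.\<close>
definition cst :: "'a::comm_ring_1 \<Rightarrow> 'a poly poly" where
  "cst a = [:[:a:]:]"

definition rvar :: "'a::comm_ring_1 poly poly" where
  "rvar = [:0, 1:]"

definition svar :: "'a::comm_ring_1 poly poly" where
  "svar = [:[:0, 1:]:]"

text \<open>Matrix of u F + G with F = y^2 - xz, G = x^2 + b y^2 + c xy + yz:
  u F + G = x^2 + (u + b) y^2 + c xy - u xz + yz.\<close>
definition M_uFG :: "'a::field \<Rightarrow> 'a \<Rightarrow> 'a poly poly \<Rightarrow> 'a poly poly^3^3" where
  "M_uFG b c u = qmat (cst (inverse 2)) 1 (u + cst b) 0 (cst c) (- u) 1"

definition H_pi :: "'a::field \<Rightarrow> 'a \<Rightarrow> 'a poly poly" where
  "H_pi b c = HH (M_uFG b c rvar) (M_uFG b c svar)"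

definition disc2 :: "'b::comm_ring_1 poly \<Rightarrow> 'b" where
  "disc2 P = (coeff P 1)^2 - 4 * coeff P 2 * coeff P 0"

end

theory Submission
  imports Defs "HOL-Number_Theory.Residues"
begin

text \<open>Expanding det(t M_{rF+G} + M_{sF+G}) shows that Delta_0, Delta_1, Delta_2 have degree 0, 1, 2
  in r, so H_pi is a quadratic in r whose coefficients, and whose discriminant, are explicit
  polynomial identities in s.  For (iii), the quantity (bc-9)^2 - 4(b^2-3c)(c^2-3b) is -3 times
  the discriminant of g; a cubic with vanishing discriminant has a repeated root, which in
  characteristic not 2 or 3 is a rational function of the coefficients, so g would have a root.
  If b^2-3c and bc-9 both vanished, that quantity would vanish too.\<close>

text \<open>HOL-Algebra, needed for CHAR_dvd_CARD, also declares constants named smult and coeff.\<close>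
hide_const (open) module.smult up_ring.coeff

lemma linear_poly_prod3:
  "[:b1, a1:] * [:b2, a2:] * [:b3, a3:] =
     [:b1*b2*b3, a1*b2*b3 + b1*a2*b3 + b1*b2*a3, a1*a2*b3 + a1*b2*a3 + b1*a2*a3, a1*a2*a3:]"
  for a1 a2 a3 b1 b2 b3 :: "'a::comm_ring_1"
  by (simp add: algebra_simps)

lemma qmat_nth:
  "qmat h a1 a2 a3 a4 a5 a6 $1$1 = a1" "qmat h a1 a2 a3 a4 a5 a6 $1$2 = h * a4"
  "qmat h a1 a2 a3 a4 a5 a6 $1$3 = h * a5" "qmat h a1 a2 a3 a4 a5 a6 $2$1 = h * a4"
  "qmat h a1 a2 a3 a4 a5 a6 $2$2 = a2" "qmat h a1 a2 a3 a4 a5 a6 $2$3 = h * a6"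
  "qmat h a1 a2 a3 a4 a5 a6 $3$1 = h * a5" "qmat h a1 a2 a3 a4 a5 a6 $3$2 = h * a6"
  "qmat h a1 a2 a3 a4 a5 a6 $3$3 = a3"
  by (simp_all add: qmat_def)

lemma Delta_pencil_uFG:
  fixes h b c R S :: "'a::idom"
  assumes "2 * h = 1"
  defines "A \<equiv> qmat h 1 (R + b) 0 c (- R) 1" and "B \<equiv> qmat h 1 (S + b) 0 c (- S) 1"
  shows "Delta 0 A B = - (h^2 * (1 + c*S + b*S^2 + S^3))"
    and "Delta 1 A B = - (h^2 * (3 + 2*c*S + b*S^2 + R*(c + 2*b*S + 3*S^2)))"
    and "Delta 2 A B = - (h^2 * (3 + c*S + R*(2*c + 2*b*S) + R^2*(b + 3*S)))"
  using assms(1)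
  by (simp_all add: A_def B_def Delta_def pencil_det_def det_3 qmat_nth linear_poly_prod3
      numeral_2_eq_2; Groebner_Basis.algebra)+

lemma HH_pencil_uFG:
  fixes h b c R S :: "'a::idom"
  assumes "2 * h = 1"
  shows "HH (qmat h 1 (R + b) 0 c (- R) 1) (qmat h 1 (S + b) 0 c (- S) 1) =
    h^4 * ((3 + 2*c*S + b*S^2 + R*(c + 2*b*S + 3*S^2))^2
           - 4 * (1 + c*S + b*S^2 + S^3) * (3 + c*S + R*(2*c + 2*b*S) + R^2*(b + 3*S)))"
  unfolding HH_def Delta_pencil_uFG[OF assms] by Groebner_Basis.algebra

lemma H_pi_eq:
  fixes b c :: "'a::field"
  assumes "(2::'a) \<noteq> 0"
  defines "g \<equiv> [:1, c, b, 1:]" and "\<kappa> \<equiv> inverse 2 ^ 4"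
  shows "H_pi b c =
    [: smult \<kappa> ([:3, 2*c, b:]^2 - 4 * g * [:3, c:]),
       smult \<kappa> (2 * [:3, 2*c, b:] * [:c, 2*b, 3:] - 4 * g * [:2*c, 2*b:]),
       smult \<kappa> ([:c, 2*b, 3:]^2 - 4 * g * [:b, 3:]) :]"
proof -
  have "2 * cst (inverse 2) = (1 :: 'a poly poly)"
    using assms(1) by (simp add: cst_def numeral_poly one_pCons)
  note HH = HH_pencil_uFG[OF this, where b = "cst b" and c = "cst c"]
  show ?thesis
    unfolding H_pi_def M_uFG_def HH g_def \<kappa>_def
    by (simp add: cst_def rvar_def svar_def numeral_poly power2_eq_square power3_eq_cube
        power4_eq_xxxx algebra_simps)
qed

lemma degree_H_pi_le:
  fixes b c :: "'a::field"
  assumes "(2::'a) \<noteq> 0"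
  shows "degree (H_pi b c) \<le> 2"
  unfolding H_pi_eq[OF assms] by simp

lemma coeff_H_pi_2:
  fixes b c :: "'a::field"
  assumes "(2::'a) \<noteq> 0"
  shows "coeff (H_pi b c) 2 = smult (- (inverse 2 ^ 4)) [:4 * b - c^2, 12, 6 * c, 4 * b, 3:]"
  unfolding H_pi_eq[OF assms]
  by (simp add: numeral_2_eq_2 numeral_poly power2_eq_square algebra_simps)

lemma disc2_H_pi:
  fixes b c :: "'a::field"
  assumes "(2::'a) \<noteq> 0"
  shows "disc2 (H_pi b c) =
    smult (16 * inverse 2 ^ 8) ([:1, c, b, 1:]^2 * [:c^2 - 3 * b, b * c - 9, b^2 - 3 * c:])"
  unfolding H_pi_eq[OF assms] disc2_def
  by (simp add: numeral_2_eq_2 numeral_poly power2_eq_square algebra_simps)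

definition cubic_discr :: "'a::comm_ring_1 \<Rightarrow> 'a \<Rightarrow> 'a \<Rightarrow> 'a" where
  "cubic_discr b c d = b^2 * c^2 - 4 * c^3 - 4 * b^3 * d - 27 * d^2 + 18 * b * c * d"

lemma irreducible_imp_no_root:
  fixes g :: "'a::field poly"
  assumes "irreducible g" and "degree g > 1"
  shows "poly g x \<noteq> 0"
proof
  assume "poly g x = 0"
  then obtain q where q: "g = [:-x, 1:] * q"
    by (auto simp: poly_eq_0_iff_dvd elim: dvdE)
  have "\<not> is_unit [:-x, 1:]"
    by (simp add: is_unit_iff_degree)
  with irreducibleD[OF assms(1) q] have "is_unit q" by blast
  then have "q \<noteq> 0" and "degree q = 0"
    using is_unit_iff_degree not_is_unit_0 by metis+
  have "degree g = degree [:-x, 1:] + degree q"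
    unfolding q using \<open>q \<noteq> 0\<close> by (intro degree_mult_eq) auto
  with \<open>degree q = 0\<close> have "degree g = 1" by simp
  with assms(2) show False by simp
qed

lemma poly_cubic_divide:
  fixes X Y :: "'a::field"
  assumes "Y \<noteq> 0"
  shows "Y^3 * poly [:d, c, b, 1:] (X / Y) = d * Y^3 + c * X * Y^2 + b * X^2 * Y + X^3"
  using assms by (simp add: field_simps power2_eq_square power3_eq_cube)

text \<open>With P = 3c - b^2 and Q = 2b^3 - 9bc + 27d (from the depressed cubic), a vanishing
  discriminant means Q^2 + 4P^3 = 0; then the repeated root is -(Q + 2bP)/(6P), or -b/3 if P = 0.\<close>
lemma irreducible_cubic_discr_nonzero:
  fixes b c d :: "'a::field"
  assumes irr: "irreducible [:d, c, b, 1:]" and "(2::'a) \<noteq> 0" and "(3::'a) \<noteq> 0"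
  shows "cubic_discr b c d \<noteq> 0"
proof
  assume discr: "cubic_discr b c d = 0"
  define P where "P = 3 * c - b^2"
  define Q where "Q = 2 * b^3 - 9 * b * c + 27 * d"
  have "Q^2 + 4 * P^3 = - 27 * cubic_discr b c d"
    by (simp add: P_def Q_def cubic_discr_def algebra_simps power2_eq_square power3_eq_cube)
  with discr have PQ: "Q^2 + 4 * P^3 = 0" by simp
  have "(6::'a) \<noteq> 0"
    using \<open>2 \<noteq> 0\<close> \<open>3 \<noteq> 0\<close> mult_eq_0_iff[of "2::'a" 3] by auto
  obtain X Y where "Y \<noteq> 0" and "d * Y^3 + c * X * Y^2 + b * X^2 * Y + X^3 = 0"
  proof (cases "P = 0")
    case True
    with PQ have "Q = 0" by simp
    then have "d * 3^3 + c * (- b) * 3^2 + b * (- b)^2 * 3 + (- b)^3 = 0"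
      by (simp add: Q_def algebra_simps power2_eq_square power3_eq_cube)
    with \<open>3 \<noteq> 0\<close> show ?thesis by (rule that)
  next
    case False
    have "d * (6 * P)^3 + c * (- (Q + 2 * b * P)) * (6 * P)^2 + b * (- (Q + 2 * b * P))^2 * (6 * P)
        + (- (Q + 2 * b * P))^3 = - Q * (Q^2 + 4 * P^3)"
      by (simp add: P_def Q_def algebra_simps power2_eq_square power3_eq_cube)
    with PQ False \<open>6 \<noteq> 0\<close> show ?thesis
      by (intro that[of "6 * P"]) auto
  qed
  then have "poly [:d, c, b, 1:] (X / Y) = 0"
    using poly_cubic_divide[of Y d c b X] by simp
  moreover have "degree [:d, c, b, 1:] > 1" by simp
  ultimately show False
    using irreducible_imp_no_root[OF irr] by blast
qed

lemma CHAR_eq_of_card_prime_power: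
  fixes p k :: nat
  assumes "prime p" and "CARD('a::{field,finite}) = p ^ k"
  shows "CHAR('a) = p"
proof -
  have "prime CHAR('a)"
    by (intro prime_CHAR_semidom finite_imp_CHAR_pos) simp
  moreover have "CHAR('a) dvd p ^ k"
    using CHAR_dvd_CARD[where 'a = 'a] assms(2) by simp
  ultimately show ?thesis
    using assms(1) by (metis prime_dvd_power primes_dvd_imp_eq)
qed

lemma of_nat_neq_0_below_CHAR:
  assumes "0 < n" and "n < CHAR('a::semiring_1)"
  shows "(of_nat n :: 'a) \<noteq> 0"
  using assms by (auto simp: of_nat_eq_0_iff_char_dvd dest: nat_dvd_not_less)

theorem mainTheorem6:
  fixes b c :: "'a::{field, finite}" and p k :: nat
  assumes "prime p" and "p \<noteq> 2" and "p \<noteq> 3" and "CARD('a) = p ^ k"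
    and "irreducible [:1, c, b, 1:]"
  shows "degree (H_pi b c) \<le> 2
      \<and> (\<exists>\<kappa>::'a. \<kappa> \<noteq> 0 \<and>
           coeff (H_pi b c) 2 = smult \<kappa> [:4 * b - c^2, 12, 6 * c, 4 * b, 3:])
      \<and> (\<exists>\<kappa>::'a. \<kappa> \<noteq> 0 \<and>
           disc2 (H_pi b c) = smult \<kappa> ([:1, c, b, 1:]^2 * [:c^2 - 3 * b, b * c - 9, b^2 - 3 * c:]))
      \<and> (b^2 - 3 * c \<noteq> 0 \<or> b * c - 9 \<noteq> 0)
      \<and> (b * c - 9)^2 - 4 * (b^2 - 3 * c) * (c^2 - 3 * b) \<noteq> 0"
proof -
  have "CHAR('a) = p"
    using assms(1,4) by (rule CHAR_eq_of_card_prime_power)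
  moreover have "3 < p"
    using prime_ge_2_nat[OF assms(1)] assms(2,3) by linarith
  ultimately have two: "(2::'a) \<noteq> 0" and three: "(3::'a) \<noteq> 0"
    using of_nat_neq_0_below_CHAR[of 2, where 'a = 'a] of_nat_neq_0_below_CHAR[of 3, where 'a = 'a]
    by simp_all
  have "(b * c - 9)^2 - 4 * (b^2 - 3 * c) * (c^2 - 3 * b) = - 3 * cubic_discr b c 1"
    by (simp add: cubic_discr_def algebra_simps power2_eq_square power3_eq_cube)
  with irreducible_cubic_discr_nonzero[OF assms(5) two three] three
  have discr: "(b * c - 9)^2 - 4 * (b^2 - 3 * c) * (c^2 - 3 * b) \<noteq> 0"
    by simp
  then have "b^2 - 3 * c \<noteq> 0 \<or> b * c - 9 \<noteq> 0"
    by auto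
  moreover have "(16::'a) \<noteq> 0"
    using power_not_zero[OF two, of 4] by simp
  then have "- (inverse (2::'a) ^ 4) \<noteq> 0" and "16 * inverse (2::'a) ^ 8 \<noteq> 0"
    using two by simp_all
  ultimately show ?thesis
    using degree_H_pi_le[OF two] coeff_H_pi_2[OF two] disc2_H_pi[OF two] discr by blast
qed

end
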